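(* Let $d\ge1$. As a multigraded vector space, the square $F_d(\mathfrak B)^2$ of the free bicommutative algebra is isomorphic to $\omega(K[Y_d])\otimes\omega(K[Z_d])$, where $\omega$ denotes the augmentation ideal (polynomials without constant term) and both $y_i$ and $z_i$ are given degree $1$ in the $i$-th grading. As a $GL_d$-module, $F_d(\mathfrak B)^2\cong\bigoplus_{p,q\ge 1}W_d(p)\otimes W_d(q)$.
   Context: $K$ is a field of characteristic $0$. $\mathfrak B$ is the variety of bicommutative algebras (identities $(x_1x_2)x_3=(x_1x_3)x_2$ and $x_1(x_2x_3)=x_2(x_1x_3)$); $F_d(\mathfrak B)$ is its free algebra on $x_1,\dots,x_d$, multigraded by the degrees in each $x_i$. $GL_d$ acts on $F_d(\mathfrak B)$ by extending its natural action on $\mathrm{span}(x_1,\dots,x_d)$ to algebra automorphisms. $K[Y_d]=K[y_1,\dots,y_d]$, $K[Z_d]=K[z_1,\dots,z_d]$ are polynomial rings, with $GL_d$ acting on $\mathrm{span}(y_i)$ and $\mathrm{span}(z_i)$ as on $\mathrm{span}(x_i)$. $W_d(p)$ is the irreducible polynomial $GL_d$-module indexed by the one-row partition $(p)$ (isomorphic to the homogeneous polynomials of degree $p$ in $d$ variables). *)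

theory Defs
  imports "HOL-Library.Poly_Mapping"
begin

text \<open>Nonassociative monomials: binary trees whose leaves are generator indices.\<close>
datatype btree = Leaf nat | Node btree btree

fun leaves :: "btree \<Rightarrow> nat set" where
  "leaves (Leaf i) = {i}"
| "leaves (Node a b) = leaves a \<union> leaves b"

fun tdeg :: "btree \<Rightarrow> nat \<Rightarrow> nat" where
  "tdeg (Leaf i) = (\<lambda>j. if j = i then 1 else 0)"
| "tdeg (Node a b) = (\<lambda>j. tdeg a j + tdeg b j)"

text \<open>Elements of the free nonassociative algebra: finitely supported coefficient
  functions on trees in the generators x_0..x_(d-1).\<close>
definition FA :: "nat \<Rightarrow> (btree \<Rightarrow> 'k::field) set" where
  "FA d = {f. finite {t. f t \<noteq> 0} \<and> (\<forall>t. f t \<noteq> 0 \<longrightarrow> leaves t \<subseteq> {..<d})}"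

definition fadd :: "(btree \<Rightarrow> 'k::field) \<Rightarrow> (btree \<Rightarrow> 'k) \<Rightarrow> btree \<Rightarrow> 'k" where
  "fadd f g = (\<lambda>t. f t + g t)"

definition fsmul :: "'k::field \<Rightarrow> (btree \<Rightarrow> 'k) \<Rightarrow> btree \<Rightarrow> 'k" where
  "fsmul c f = (\<lambda>t. c * f t)"

definition fzero :: "btree \<Rightarrow> 'k::field" where
  "fzero = (\<lambda>t. 0)"

text \<open>Bilinear multiplication: (x_a)(x_b) = x_(Node a b).\<close>
definition fmult :: "(btree \<Rightarrow> 'k::field) \<Rightarrow> (btree \<Rightarrow> 'k) \<Rightarrow> btree \<Rightarrow> 'k" where
  "fmult f g = (\<lambda>t. case t of Leaf _ \<Rightarrow> 0 | Node a b \<Rightarrow> f a * g b)"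

definition fminus :: "(btree \<Rightarrow> 'k::field) \<Rightarrow> (btree \<Rightarrow> 'k) \<Rightarrow> btree \<Rightarrow> 'k" where
  "fminus f g = (\<lambda>t. f t - g t)"

text \<open>The T-ideal of bicommutative identities in the free nonassociative algebra,
  i.e. the ideal generated by all evaluations of the two defining identities.
  The free bicommutative algebra F_d(B) is FA d modulo this ideal.\<close>
inductive_set bicomm_ideal :: "nat \<Rightarrow> (btree \<Rightarrow> 'k::field) set" for d where
  id1: "\<lbrakk>u \<in> FA d; v \<in> FA d; w \<in> FA d\<rbrakk> \<Longrightarrow>
          fminus (fmult (fmult u v) w) (fmult (fmult u w) v) \<in> bicomm_ideal d"
| id2: "\<lbrakk>u \<in> FA d; v \<in> FA d; w \<in> FA d\<rbrakk> \<Longrightarrow>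
          fminus (fmult u (fmult v w)) (fmult v (fmult u w)) \<in> bicomm_ideal d"
| zero: "fzero \<in> bicomm_ideal d"
| add: "\<lbrakk>f \<in> bicomm_ideal d; g \<in> bicomm_ideal d\<rbrakk> \<Longrightarrow> fadd f g \<in> bicomm_ideal d"
| smul: "f \<in> bicomm_ideal d \<Longrightarrow> fsmul c f \<in> bicomm_ideal d"
| lmult: "\<lbrakk>f \<in> bicomm_ideal d; a \<in> FA d\<rbrakk> \<Longrightarrow> fmult a f \<in> bicomm_ideal d"
| rmult: "\<lbrakk>f \<in> bicomm_ideal d; a \<in> FA d\<rbrakk> \<Longrightarrow> fmult f a \<in> bicomm_ideal d"

text \<open>The square of the free nonassociative algebra: the span of all products.
  Its image in the quotient is F_d(B)^2, i.e. F_d(B)^2 = FA_sq d / (FA_sq d \<inter> bicomm_ideal d).\<close>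
inductive_set FA_sq :: "nat \<Rightarrow> (btree \<Rightarrow> 'k::field) set" for d where
  prod: "\<lbrakk>u \<in> FA d; v \<in> FA d\<rbrakk> \<Longrightarrow> fmult u v \<in> FA_sq d"
| zero: "fzero \<in> FA_sq d"
| add: "\<lbrakk>f \<in> FA_sq d; g \<in> FA_sq d\<rbrakk> \<Longrightarrow> fadd f g \<in> FA_sq d"
| smul: "f \<in> FA_sq d \<Longrightarrow> fsmul c f \<in> FA_sq d"

definition FA_homog :: "(nat \<Rightarrow> nat) \<Rightarrow> (btree \<Rightarrow> 'k::field) \<Rightarrow> bool" where
  "FA_homog \<alpha> f \<longleftrightarrow> (\<forall>t. f t \<noteq> 0 \<longrightarrow> tdeg t = \<alpha>)"

definition mat_mult :: "nat \<Rightarrow> (nat \<Rightarrow> nat \<Rightarrow> 'k::field) \<Rightarrow> (nat \<Rightarrow> nat \<Rightarrow> 'k) \<Rightarrow> nat \<Rightarrow> nat \<Rightarrow> 'k" where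
  "mat_mult d g h = (\<lambda>i j. \<Sum>k<d. g i k * h k j)"

definition GL :: "nat \<Rightarrow> (nat \<Rightarrow> nat \<Rightarrow> 'k::field) set" where
  "GL d = {g. \<exists>h. \<forall>i<d. \<forall>j<d.
      mat_mult d g h i j = (if i = j then 1 else 0) \<and>
      mat_mult d h g i j = (if i = j then 1 else 0)}"

text \<open>Action on generators: g x_i = \<Sum>_j g_(j,i) x_j, extended to algebra endomorphisms.\<close>
definition fsum :: "'a set \<Rightarrow> ('a \<Rightarrow> btree \<Rightarrow> 'k::field) \<Rightarrow> btree \<Rightarrow> 'k" where
  "fsum A F = (\<lambda>t. \<Sum>a\<in>A. F a t)"

definition fbasis :: "btree \<Rightarrow> btree \<Rightarrow> 'k::field" where
  "fbasis s = (\<lambda>t. if t = s then 1 else 0)"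

fun act_tree :: "nat \<Rightarrow> (nat \<Rightarrow> nat \<Rightarrow> 'k::field) \<Rightarrow> btree \<Rightarrow> btree \<Rightarrow> 'k" where
  "act_tree d g (Leaf i) = fsum {..<d} (\<lambda>j. fsmul (g j i) (fbasis (Leaf j)))"
| "act_tree d g (Node a b) = fmult (act_tree d g a) (act_tree d g b)"

definition act_FA :: "nat \<Rightarrow> (nat \<Rightarrow> nat \<Rightarrow> 'k::field) \<Rightarrow> (btree \<Rightarrow> 'k) \<Rightarrow> btree \<Rightarrow> 'k" where
  "act_FA d g f = fsum {t. f t \<noteq> 0} (\<lambda>t. fsmul (f t) (act_tree d g t))"

section \<open>Polynomials in y_i (= Inl i) and z_i (= Inr i)\<close>

type_synonym 'k pol = "((nat + nat) \<Rightarrow>\<^sub>0 nat) \<Rightarrow>\<^sub>0 'k"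

definition Yv :: "nat \<Rightarrow> 'k::field pol" where
  "Yv i = Poly_Mapping.single (Poly_Mapping.single (Inl i) 1) 1"

definition Zv :: "nat \<Rightarrow> 'k::field pol" where
  "Zv i = Poly_Mapping.single (Poly_Mapping.single (Inr i) 1) 1"

definition psmul :: "'k::field \<Rightarrow> 'k pol \<Rightarrow> 'k pol" where
  "psmul c p = Poly_Mapping.map (\<lambda>x. c * x) p"

definition mdeg :: "((nat + nat) \<Rightarrow>\<^sub>0 nat) \<Rightarrow> nat \<Rightarrow> nat" where
  "mdeg m = (\<lambda>i. Poly_Mapping.lookup m (Inl i) + Poly_Mapping.lookup m (Inr i))"

definition ydeg :: "((nat + nat) \<Rightarrow>\<^sub>0 nat) \<Rightarrow> nat" where
  "ydeg m = (\<Sum>v\<in>Poly_Mapping.keys m. case v of Inl _ \<Rightarrow> Poly_Mapping.lookup m v | Inr _ \<Rightarrow> 0)"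

definition zdeg :: "((nat + nat) \<Rightarrow>\<^sub>0 nat) \<Rightarrow> nat" where
  "zdeg m = (\<Sum>v\<in>Poly_Mapping.keys m. case v of Inl _ \<Rightarrow> 0 | Inr _ \<Rightarrow> Poly_Mapping.lookup m v)"

definition mono_vars_ok :: "nat \<Rightarrow> ((nat + nat) \<Rightarrow>\<^sub>0 nat) \<Rightarrow> bool" where
  "mono_vars_ok d m \<longleftrightarrow> (\<forall>v\<in>Poly_Mapping.keys m. case v of Inl i \<Rightarrow> i < d | Inr i \<Rightarrow> i < d)"

text \<open>\<omega>(K[Y_d]) \<otimes> \<omega>(K[Z_d]), realised inside K[Y_d] \<otimes> K[Z_d] = K[Y_d,Z_d]:
  the span of monomials y^\<beta> z^\<gamma> with \<beta> \<noteq> 0 and \<gamma> \<noteq> 0.\<close>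
definition omega_tensor :: "nat \<Rightarrow> 'k::field pol set" where
  "omega_tensor d = {p. \<forall>m\<in>Poly_Mapping.keys p. mono_vars_ok d m \<and> ydeg m \<ge> 1 \<and> zdeg m \<ge> 1}"

definition pol_homog :: "(nat \<Rightarrow> nat) \<Rightarrow> 'k::field pol \<Rightarrow> bool" where
  "pol_homog \<alpha> p \<longleftrightarrow> (\<forall>m\<in>Poly_Mapping.keys p. mdeg m = \<alpha>)"

text \<open>W_d(p) \<otimes> W_d(q), realised as the bihomogeneous polynomials of degree p in Y_d
  and degree q in Z_d (W_d(p) = homogeneous polynomials of degree p).\<close>
definition Wtensor :: "nat \<Rightarrow> nat \<Rightarrow> nat \<Rightarrow> 'k::field pol set" where
  "Wtensor d p q = {P. \<forall>m\<in>Poly_Mapping.keys P. mono_vars_ok d m \<and> ydeg m = p \<and> zdeg m = q}"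

definition Wsum :: "nat \<Rightarrow> 'k::field pol set" where
  "Wsum d = {P. \<exists>S F. finite S \<and> S \<subseteq> {(p,q). p \<ge> 1 \<and> q \<ge> 1}
                  \<and> (\<forall>pq\<in>S. F pq \<in> Wtensor d (fst pq) (snd pq)) \<and> P = (\<Sum>pq\<in>S. F pq)}"

definition lin_var :: "nat \<Rightarrow> (nat \<Rightarrow> nat \<Rightarrow> 'k::field) \<Rightarrow> nat + nat \<Rightarrow> 'k pol" where
  "lin_var d g v = (case v of
      Inl i \<Rightarrow> (\<Sum>j<d. psmul (g j i) (Yv j))
    | Inr i \<Rightarrow> (\<Sum>j<d. psmul (g j i) (Zv j)))"

definition act_pol :: "nat \<Rightarrow> (nat \<Rightarrow> nat \<Rightarrow> 'k::field) \<Rightarrow> 'k pol \<Rightarrow> 'k pol" where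
  "act_pol d g P = (\<Sum>m\<in>Poly_Mapping.keys P. psmul (Poly_Mapping.lookup P m) (\<Prod>v\<in>Poly_Mapping.keys m. lin_var d g v ^ Poly_Mapping.lookup m v))"

text \<open>phi : FA_sq d \<rightarrow> V is K-linear, maps onto V, and has kernel exactly the part of
  the bicommutative T-ideal in FA_sq d; i.e. phi induces a linear isomorphism
  F_d(B)^2 = FA_sq d / (FA_sq d \<inter> bicomm_ideal d) \<cong> V.\<close>
definition induces_iso :: "nat \<Rightarrow> ((btree \<Rightarrow> 'k::field) \<Rightarrow> 'k pol) \<Rightarrow> 'k pol set \<Rightarrow> bool" where
  "induces_iso d \<phi> V \<longleftrightarrow>
     (\<forall>f\<in>FA_sq d. \<forall>g\<in>FA_sq d. \<phi> (fadd f g) = \<phi> f + \<phi> g) \<and>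
     (\<forall>f\<in>FA_sq d. \<forall>c. \<phi> (fsmul c f) = psmul c (\<phi> f)) \<and>
     \<phi> ` FA_sq d = V \<and>
     (\<forall>f\<in>FA_sq d. \<phi> f = 0 \<longleftrightarrow> f \<in> bicomm_ideal d)"

end

theory Submission
  imports Defs
begin

text \<open>Send a nonassociative monomial to the commutative monomial in which every leaf x_i that is a
  left child becomes y_i and every right child becomes z_i. Both bicommutative identities preserve
  this monomial, so the induced linear map kills the T-ideal, and on products it lands in
  \<omega>(K[Y_d]) \<otimes> \<omega>(K[Z_d]); building a tree for every monomial shows it is onto.
  For injectivity, the identities allow moving any y_i of a product to the front, x_i(\<dots>), and,
  once a single y is left, any z_j to the back, (\<dots>)x_j; by induction on the size, two products
  with the same monomial are then congruent modulo the ideal. Since the map turns products of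
  trees into products of polynomials it commutes with linear substitutions, and grouping monomials
  by (y-degree, z-degree) = (p, q) identifies the target with the sum of the W_d(p) \<otimes> W_d(q).\<close>

definition supp :: "(btree \<Rightarrow> 'k::zero) \<Rightarrow> btree set" where
  "supp f = {t. f t \<noteq> 0}"

lemma supp_fzero [simp]: "supp fzero = {}"
  by (simp add: supp_def fzero_def)

lemma supp_fbasis [simp]: "supp (fbasis t) = {t}"
  by (auto simp: supp_def fbasis_def)

lemma supp_fadd: "supp (fadd f g) \<subseteq> supp f \<union> supp g"
  by (auto simp: supp_def fadd_def)

lemma supp_fminus: "supp (fminus f g) \<subseteq> supp f \<union> supp g"
  by (auto simp: supp_def fminus_def)

lemma supp_fsmul: "supp (fsmul c f) \<subseteq> supp f"
  by (auto simp: supp_def fsmul_def)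

lemma supp_fmult: "supp (fmult u v) \<subseteq> (\<lambda>(a, b). Node a b) ` (supp u \<times> supp v)"
proof
  fix t assume "t \<in> supp (fmult u v)"
  then obtain a b where "t = Node a b" "u a \<noteq> 0" "v b \<noteq> 0"
    by (cases t) (auto simp: supp_def fmult_def)
  then show "t \<in> (\<lambda>(a, b). Node a b) ` (supp u \<times> supp v)"
    by (auto simp: supp_def)
qed

lemma finite_supp_fadd: "finite (supp f) \<Longrightarrow> finite (supp g) \<Longrightarrow> finite (supp (fadd f g))"
  by (meson finite_UnI finite_subset supp_fadd)

lemma finite_supp_fminus: "finite (supp f) \<Longrightarrow> finite (supp g) \<Longrightarrow> finite (supp (fminus f g))"
  by (meson finite_UnI finite_subset supp_fminus)

lemma finite_supp_fsmul: "finite (supp f) \<Longrightarrow> finite (supp (fsmul c f))"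
  by (meson finite_subset supp_fsmul)

lemma finite_supp_fmult: "finite (supp u) \<Longrightarrow> finite (supp v) \<Longrightarrow> finite (supp (fmult u v))"
  by (rule finite_subset[OF supp_fmult]) auto

lemma fsum_empty: "fsum {} F = fzero"
  by (simp add: fsum_def fzero_def)

lemma fsum_insert: "finite A \<Longrightarrow> a \<notin> A \<Longrightarrow> fsum (insert a A) F = fadd (F a) (fsum A F)"
  by (simp add: fsum_def fadd_def)

lemma finite_supp_fsum:
  "finite A \<Longrightarrow> (\<And>a. a \<in> A \<Longrightarrow> finite (supp (F a))) \<Longrightarrow> finite (supp (fsum A F))"
  by (induction A rule: finite_induct) (auto simp: fsum_empty fsum_insert intro: finite_supp_fadd)

lemma fbasis_Node: "fbasis (Node a b) = fmult (fbasis a) (fbasis b)"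
  by (auto simp: fbasis_def fmult_def split: btree.splits)

definition gen_tree :: "nat \<Rightarrow> btree \<Rightarrow> bool" where
  "gen_tree d t \<longleftrightarrow> leaves t \<subseteq> {..<d}"

lemma gen_tree_simps [simp]:
  "gen_tree d (Leaf i) \<longleftrightarrow> i < d"
  "gen_tree d (Node a b) \<longleftrightarrow> gen_tree d a \<and> gen_tree d b"
  by (auto simp: gen_tree_def)

lemma FA_iff: "f \<in> FA d \<longleftrightarrow> finite (supp f) \<and> (\<forall>t\<in>supp f. gen_tree d t)"
  by (auto simp: FA_def supp_def gen_tree_def)

lemma fbasis_in_FA: "gen_tree d t \<Longrightarrow> fbasis t \<in> FA d"
  by (simp add: FA_iff)

definition is_node :: "btree \<Rightarrow> bool" where
  "is_node t \<longleftrightarrow> (\<exists>a b. t = Node a b)"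

lemma is_node_simps [simp]: "is_node (Node a b)" "\<not> is_node (Leaf i)"
  by (auto simp: is_node_def)

lemma not_node_Leaf: "\<not> is_node t \<Longrightarrow> \<exists>i. t = Leaf i"
  by (cases t) auto

lemma FA_sqD: "f \<in> FA_sq d \<Longrightarrow> finite (supp f) \<and> (\<forall>t\<in>supp f. is_node t \<and> gen_tree d t)"
proof (induction rule: FA_sq.induct)
  case (prod u v)
  then show ?case using supp_fmult[of u v] by (auto simp: FA_iff finite_supp_fmult)
next
  case (add f g)
  then show ?case using supp_fadd[of f g] by (auto simp: finite_supp_fadd)
next
  case (smul f c)
  then show ?case using supp_fsmul[of c f] by (auto simp: finite_supp_fsmul)
qed simp

lemma fbasis_in_FA_sq: "is_node t \<Longrightarrow> gen_tree d t \<Longrightarrow> (fbasis t :: btree \<Rightarrow> 'k::field) \<in> FA_sq d"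
  by (auto simp: is_node_def fbasis_Node intro!: FA_sq.prod fbasis_in_FA)

lemma fsum_in_FA_sq: "finite A \<Longrightarrow> (\<And>a. a \<in> A \<Longrightarrow> F a \<in> FA_sq d) \<Longrightarrow> fsum A F \<in> FA_sq d"
  by (induction A rule: finite_induct) (auto simp: fsum_empty fsum_insert intro: FA_sq.intros)

lemma fsum_in_bicomm_ideal:
  "finite A \<Longrightarrow> (\<And>a. a \<in> A \<Longrightarrow> F a \<in> bicomm_ideal d) \<Longrightarrow> fsum A F \<in> bicomm_ideal d"
  by (induction A rule: finite_induct)
    (auto simp: fsum_empty fsum_insert intro: bicomm_ideal.zero bicomm_ideal.add)

type_synonym monomial = "(nat + nat) \<Rightarrow>\<^sub>0 nat"

text \<open>A leaf x_i becomes y_i if it is a left child and z_i if it is a right child; the flag tells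
  whether the tree itself is a left child, which matters only for leaves.\<close>
fun yz_mon :: "bool \<Rightarrow> btree \<Rightarrow> monomial" where
  "yz_mon s (Leaf i) = Poly_Mapping.single (if s then Inl i else Inr i) 1"
| "yz_mon s (Node a b) = yz_mon True a + yz_mon False b"

definition yz_map :: "bool \<Rightarrow> (btree \<Rightarrow> 'k::field) \<Rightarrow> 'k pol" where
  "yz_map s f = (\<Sum>t\<in>supp f. Poly_Mapping.single (yz_mon s t) (f t))"

lemma psmul_eq_mult: "psmul c p = Poly_Mapping.single 0 c * p"
  unfolding psmul_def by (rule mult_map_scale_conv_mult)

lemma yz_map_superset:
  assumes "finite S" "supp f \<subseteq> S"
  shows "yz_map s f = (\<Sum>t\<in>S. Poly_Mapping.single (yz_mon s t) (f t))"
  unfolding yz_map_def by (rule sum.mono_neutral_left) (use assms in \<open>auto simp: supp_def\<close>)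

lemma yz_map_fzero [simp]: "yz_map s fzero = 0"
  by (simp add: yz_map_def)

lemma yz_map_fbasis [simp]: "yz_map s (fbasis t) = Poly_Mapping.single (yz_mon s t) 1"
  unfolding yz_map_def supp_fbasis by (simp add: fbasis_def)

lemma yz_map_fadd:
  assumes "finite (supp f)" "finite (supp g)"
  shows "yz_map s (fadd f g) = yz_map s f + yz_map s g"
  using assms supp_fadd[of f g]
  by (simp add: yz_map_superset[of "supp f \<union> supp g"] fadd_def single_add sum.distrib)

lemma yz_map_fminus:
  assumes "finite (supp f)" "finite (supp g)"
  shows "yz_map s (fminus f g) = yz_map s f - yz_map s g"
  using assms supp_fminus[of f g]
  by (simp add: yz_map_superset[of "supp f \<union> supp g"] fminus_def single_diff sum_subtractf)

lemma yz_map_fsmul: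
  assumes "finite (supp f)"
  shows "yz_map s (fsmul c f) = psmul c (yz_map s f)"
proof -
  have "yz_map s (fsmul c f) = (\<Sum>t\<in>supp f. Poly_Mapping.single (yz_mon s t) (c * f t))"
    using assms supp_fsmul[of c f] by (simp add: yz_map_superset fsmul_def)
  then show ?thesis
    by (simp add: yz_map_def psmul_eq_mult sum_distrib_left mult_single)
qed

lemma yz_map_fmult:
  assumes "finite (supp u)" "finite (supp v)"
  shows "yz_map s (fmult u v) = yz_map True u * yz_map False v"
proof -
  let ?P = "supp u \<times> supp v"
  have "yz_map s (fmult u v) = (\<Sum>t\<in>(\<lambda>(a, b). Node a b) ` ?P. Poly_Mapping.single (yz_mon s t) (fmult u v t))"
    by (rule yz_map_superset) (use assms supp_fmult in auto)
  also have "\<dots> = (\<Sum>(a, b)\<in>?P. Poly_Mapping.single (yz_mon True a) (u a) * Poly_Mapping.single (yz_mon False b) (v b))"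
    by (subst sum.reindex) (auto simp: inj_on_def fmult_def mult_single intro!: sum.cong)
  also have "\<dots> = yz_map True u * yz_map False v"
    by (simp add: yz_map_def sum.cartesian_product sum_product)
  finally show ?thesis .
qed

lemma yz_map_fsum:
  "finite A \<Longrightarrow> (\<And>a. a \<in> A \<Longrightarrow> finite (supp (F a))) \<Longrightarrow> yz_map s (fsum A F) = (\<Sum>a\<in>A. yz_map s (F a))"
  by (induction A rule: finite_induct) (auto simp: fsum_empty fsum_insert yz_map_fadd finite_supp_fsum)

lemma lookup_yz_map:
  "Poly_Mapping.lookup (yz_map s f) m = (\<Sum>t\<in>supp f. if yz_mon s t = m then f t else 0)"
  by (simp add: yz_map_def lookup_sum lookup_single when_def)

lemma keys_yz_map: "Poly_Mapping.keys (yz_map s f) \<subseteq> yz_mon s ` supp f"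
proof -
  have "Poly_Mapping.keys (yz_map s f) \<subseteq> (\<Union>t\<in>supp f. Poly_Mapping.keys (Poly_Mapping.single (yz_mon s t) (f t)))"
    unfolding yz_map_def by (rule keys_sum)
  then show ?thesis by auto
qed

lemma yz_map_bicomm_ideal:
  "f \<in> bicomm_ideal d \<Longrightarrow> finite (supp f) \<and> yz_map True f = 0 \<and> yz_map False f = 0"
proof (induction rule: bicomm_ideal.induct)
  case (id1 u v w)
  then show ?case
    by (simp add: FA_iff finite_supp_fmult finite_supp_fminus yz_map_fminus yz_map_fmult mult_ac)
next
  case (id2 u v w)
  then show ?case
    by (simp add: FA_iff finite_supp_fmult finite_supp_fminus yz_map_fminus yz_map_fmult mult_ac)
next
  case (add f g)
  then show ?case by (simp add: finite_supp_fadd yz_map_fadd)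
next
  case (smul f c)
  then show ?case by (simp add: finite_supp_fsmul yz_map_fsmul psmul_eq_mult)
next
  case (lmult f a)
  then show ?case by (simp add: FA_iff finite_supp_fmult yz_map_fmult)
next
  case (rmult f a)
  then show ?case by (simp add: FA_iff finite_supp_fmult yz_map_fmult)
qed simp

lemma sum_keys_add:
  fixes h :: "'a \<Rightarrow> nat \<Rightarrow> 'b::comm_monoid_add"
  assumes "\<And>v. h v 0 = 0" "\<And>v a b. h v (a + b) = h v a + h v b"
  shows "(\<Sum>v\<in>Poly_Mapping.keys (m + n). h v (Poly_Mapping.lookup (m + n) v))
       = (\<Sum>v\<in>Poly_Mapping.keys m. h v (Poly_Mapping.lookup m v))
       + (\<Sum>v\<in>Poly_Mapping.keys n. h v (Poly_Mapping.lookup n v))"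
proof -
  let ?K = "Poly_Mapping.keys m \<union> Poly_Mapping.keys n"
  have extend: "(\<Sum>v\<in>Poly_Mapping.keys p. h v (Poly_Mapping.lookup p v))
      = (\<Sum>v\<in>?K. h v (Poly_Mapping.lookup p v))" if "Poly_Mapping.keys p \<subseteq> ?K" for p
    by (rule sum.mono_neutral_left) (use that assms(1) in \<open>auto simp: in_keys_iff\<close>)
  have "(\<Sum>v\<in>Poly_Mapping.keys (m + n). h v (Poly_Mapping.lookup (m + n) v))
      = (\<Sum>v\<in>?K. h v (Poly_Mapping.lookup (m + n) v))"
    using keys_add[of m n] by (rule extend)
  then show ?thesis
    by (simp add: extend[of m] extend[of n] lookup_add assms(2) sum.distrib)
qed

lemma prod_keys_add:
  fixes h :: "'a \<Rightarrow> nat \<Rightarrow> 'b::comm_monoid_mult"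
  assumes "\<And>v. h v 0 = 1" "\<And>v a b. h v (a + b) = h v a * h v b"
  shows "(\<Prod>v\<in>Poly_Mapping.keys (m + n). h v (Poly_Mapping.lookup (m + n) v))
       = (\<Prod>v\<in>Poly_Mapping.keys m. h v (Poly_Mapping.lookup m v))
       * (\<Prod>v\<in>Poly_Mapping.keys n. h v (Poly_Mapping.lookup n v))"
proof -
  let ?K = "Poly_Mapping.keys m \<union> Poly_Mapping.keys n"
  have extend: "(\<Prod>v\<in>Poly_Mapping.keys p. h v (Poly_Mapping.lookup p v))
      = (\<Prod>v\<in>?K. h v (Poly_Mapping.lookup p v))" if "Poly_Mapping.keys p \<subseteq> ?K" for p
    by (rule prod.mono_neutral_left) (use that assms(1) in \<open>auto simp: in_keys_iff\<close>)
  have "(\<Prod>v\<in>Poly_Mapping.keys (m + n). h v (Poly_Mapping.lookup (m + n) v))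
      = (\<Prod>v\<in>?K. h v (Poly_Mapping.lookup (m + n) v))"
    using keys_add[of m n] by (rule extend)
  then show ?thesis
    by (simp add: extend[of m] extend[of n] lookup_add assms(2) prod.distrib)
qed

lemma ydeg_add [simp]: "ydeg (m + n) = ydeg m + ydeg n"
  unfolding ydeg_def by (rule sum_keys_add) (simp_all split: sum.split)

lemma zdeg_add [simp]: "zdeg (m + n) = zdeg m + zdeg n"
  unfolding zdeg_def by (rule sum_keys_add) (simp_all split: sum.split)

lemma ydeg_single [simp]: "ydeg (Poly_Mapping.single v (Suc 0)) = (case v of Inl _ \<Rightarrow> 1 | Inr _ \<Rightarrow> 0)"
  by (cases v) (simp_all add: ydeg_def)

lemma zdeg_single [simp]: "zdeg (Poly_Mapping.single v (Suc 0)) = (case v of Inl _ \<Rightarrow> 0 | Inr _ \<Rightarrow> 1)"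
  by (cases v) (simp_all add: zdeg_def)

lemma ydeg_eq_0_iff: "ydeg m = 0 \<longleftrightarrow> (\<forall>i. Poly_Mapping.lookup m (Inl i) = 0)"
  by (auto simp: ydeg_def in_keys_iff split: sum.splits)

lemma zdeg_eq_0_iff: "zdeg m = 0 \<longleftrightarrow> (\<forall>i. Poly_Mapping.lookup m (Inr i) = 0)"
  by (auto simp: zdeg_def in_keys_iff split: sum.splits)

lemma ex_Inl_if_ydeg_pos: "ydeg m > 0 \<Longrightarrow> \<exists>i. Poly_Mapping.lookup m (Inl i) > 0"
  by (metis gr0I ydeg_eq_0_iff)

lemma ex_Inr_if_zdeg_pos: "zdeg m > 0 \<Longrightarrow> \<exists>j. Poly_Mapping.lookup m (Inr j) > 0"
  by (metis gr0I zdeg_eq_0_iff)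

lemma split_off_var:
  fixes m :: "'a \<Rightarrow>\<^sub>0 nat"
  assumes "Poly_Mapping.lookup m v > 0"
  shows "m = Poly_Mapping.single v 1 + (m - Poly_Mapping.single v 1)"
  by (rule poly_mapping_eqI) (use assms in \<open>auto simp: lookup_add lookup_minus lookup_single when_def\<close>)

lemma ydeg_zdeg_eq_0: "ydeg m + zdeg m = 0 \<Longrightarrow> m = 0"
  by (rule poly_mapping_eqI) (metis add_is_0 ydeg_eq_0_iff zdeg_eq_0_iff lookup_zero sum.exhaust)

lemma mono_vars_ok_diff: "mono_vars_ok d m \<Longrightarrow> mono_vars_ok d (m - n)"
  unfolding mono_vars_ok_def by (auto simp: in_keys_iff lookup_minus)

lemma mono_vars_ok_lookup:
  "mono_vars_ok d m \<Longrightarrow> Poly_Mapping.lookup m (Inl i) > 0 \<Longrightarrow> i < d"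
  "mono_vars_ok d m \<Longrightarrow> Poly_Mapping.lookup m (Inr i) > 0 \<Longrightarrow> i < d"
  unfolding mono_vars_ok_def by (metis in_keys_iff less_irrefl sum.case)+

declare lookup_add [simp] lookup_single [simp] when_def [simp]

lemma yz_mon_node: "is_node t \<Longrightarrow> yz_mon True t = yz_mon False t"
  by (auto simp: is_node_def)

lemma ydeg_yz_mon_True: "ydeg (yz_mon True t) \<ge> 1"
  by (induction t) auto

lemma zdeg_yz_mon_False: "zdeg (yz_mon False t) \<ge> 1"
  by (induction t) auto

lemma ydeg_yz_mon_False_eq_0: "ydeg (yz_mon False t) = 0 \<longleftrightarrow> \<not> is_node t"
proof (cases t)
  case (Node a b)
  then show ?thesis using ydeg_yz_mon_True[of a] by simp
qed simp

lemma zdeg_yz_mon_True_eq_0: "zdeg (yz_mon True t) = 0 \<longleftrightarrow> \<not> is_node t"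
proof (cases t)
  case (Node a b)
  then show ?thesis using zdeg_yz_mon_False[of b] by simp
qed simp

lemma ydeg_plus_zdeg_yz_mon: "ydeg (yz_mon s t) + zdeg (yz_mon s t) = size t + 1"
proof (induction t arbitrary: s)
  case (Node a b)
  show ?case using Node.IH(1)[of True] Node.IH(2)[of False] by simp
qed simp

lemma mdeg_yz_mon: "mdeg (yz_mon s t) = tdeg t"
proof -
  have "Poly_Mapping.lookup (yz_mon s t) (Inl i) + Poly_Mapping.lookup (yz_mon s t) (Inr i) = tdeg t i" for i
  proof (induction t arbitrary: s)
    case (Node a b)
    show ?case using Node.IH(1)[of True] Node.IH(2)[of False] by simp
  qed simp
  then show ?thesis by (auto simp: mdeg_def)
qed

lemma keys_yz_mon:
  "v \<in> Poly_Mapping.keys (yz_mon s t) \<Longrightarrow> (case v of Inl j \<Rightarrow> j | Inr j \<Rightarrow> j) \<in> leaves t"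
  by (induction t arbitrary: s) (auto simp: in_keys_iff split: if_splits)

lemma mono_vars_ok_yz_mon: "gen_tree d t \<Longrightarrow> mono_vars_ok d (yz_mon s t)"
  unfolding mono_vars_ok_def gen_tree_def by (auto dest: keys_yz_mon split: sum.split)

lemma yz_mon_var_bound:
  "gen_tree d t \<Longrightarrow> Poly_Mapping.lookup (yz_mon s t) (Inl i) > 0 \<Longrightarrow> i < d"
  "gen_tree d t \<Longrightarrow> Poly_Mapping.lookup (yz_mon s t) (Inr i) > 0 \<Longrightarrow> i < d"
  using mono_vars_ok_lookup mono_vars_ok_yz_mon by blast+

lemma right_factor_Leaf:
  assumes "is_node t" "ydeg (yz_mon True t) = 1"
  obtains a j where "t = Node a (Leaf j)"
proof -
  obtain a b where t: "t = Node a b" using assms(1) by (auto simp: is_node_def)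
  then have "ydeg (yz_mon False b) = 0" using assms(2) ydeg_yz_mon_True[of a] by simp
  then show ?thesis using t that not_node_Leaf ydeg_yz_mon_False_eq_0 by blast
qed

lemma product_of_leaves:
  assumes "is_node t" "ydeg (yz_mon True t) = 1" "zdeg (yz_mon True t) = 1"
  obtains i j where "t = Node (Leaf i) (Leaf j)"
proof -
  obtain a j where t: "t = Node a (Leaf j)" using assms(1,2) by (rule right_factor_Leaf)
  then have "zdeg (yz_mon True a) = 0" using assms(3) by simp
  then show ?thesis using t that not_node_Leaf zdeg_yz_mon_True_eq_0 by blast
qed

subsection \<open>Congruence modulo the bicommutative ideal\<close>

text \<open>The field enters only through the type of the ideal, hence the type argument.\<close>
definition tcong :: "'k::field itself \<Rightarrow> nat \<Rightarrow> btree \<Rightarrow> btree \<Rightarrow> bool" where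
  "tcong K d t s \<longleftrightarrow> fminus (fbasis t) (fbasis s) \<in> (bicomm_ideal d :: (btree \<Rightarrow> 'k) set)"

lemma tcong_yz_mon:
  fixes K :: "'k::field itself"
  assumes "tcong K d t s"
  shows "yz_mon r t = yz_mon r s"
proof -
  have "yz_map r (fminus (fbasis t) (fbasis s) :: btree \<Rightarrow> 'k) = 0"
    using yz_map_bicomm_ideal[OF assms[unfolded tcong_def]] by (cases r) auto
  then have "Poly_Mapping.single (yz_mon r t) (1::'k) = Poly_Mapping.single (yz_mon r s) 1"
    by (simp add: yz_map_fminus)
  then show ?thesis
    by (metis lookup_single_eq lookup_single_not_eq one_neq_zero)
qed

lemma tcong_size: "tcong K d t s \<Longrightarrow> size t = size s"
  by (metis ydeg_plus_zdeg_yz_mon tcong_yz_mon add_right_cancel)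

context
  fixes K :: "'k::field itself" and d :: nat
begin

abbreviation tcong_infix (infix "\<approx>" 50) where "t \<approx> s \<equiv> tcong K d t s"

lemma tcong_refl: "t \<approx> t"
  using bicomm_ideal.zero unfolding tcong_def fzero_def fminus_def by simp

lemma tcong_sym: "t \<approx> s \<Longrightarrow> s \<approx> t"
  unfolding tcong_def
  by (drule bicomm_ideal.smul[where c = "-1"]) (simp add: fsmul_def fminus_def)

lemma tcong_trans [trans]: "t \<approx> s \<Longrightarrow> s \<approx> r \<Longrightarrow> t \<approx> r"
  unfolding tcong_def
  by (drule (1) bicomm_ideal.add) (simp add: fadd_def fminus_def)

lemma tcong_Node_left:
  assumes "a \<approx> a'" "gen_tree d b"
  shows "Node a b \<approx> Node a' b"
proof -
  have "fmult (fminus (fbasis a) (fbasis a')) (fbasis b) = (fminus (fbasis (Node a b)) (fbasis (Node a' b)) :: btree \<Rightarrow> 'k)"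
    by (rule ext) (auto simp: fbasis_def fmult_def fminus_def split: btree.splits)
  with assms bicomm_ideal.rmult[OF _ fbasis_in_FA] show ?thesis
    unfolding tcong_def by metis
qed

lemma tcong_Node_right:
  assumes "b \<approx> b'" "gen_tree d a"
  shows "Node a b \<approx> Node a b'"
proof -
  have "fmult (fbasis a) (fminus (fbasis b) (fbasis b')) = (fminus (fbasis (Node a b)) (fbasis (Node a b')) :: btree \<Rightarrow> 'k)"
    by (rule ext) (auto simp: fbasis_def fmult_def fminus_def split: btree.splits)
  with assms bicomm_ideal.lmult[OF _ fbasis_in_FA] show ?thesis
    unfolding tcong_def by metis
qed

lemma tcong_right_comm:
  "gen_tree d u \<Longrightarrow> gen_tree d v \<Longrightarrow> gen_tree d w \<Longrightarrow> Node (Node u v) w \<approx> Node (Node u w) v"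
  unfolding tcong_def fbasis_Node by (intro bicomm_ideal.id1 fbasis_in_FA)

lemma tcong_left_comm:
  "gen_tree d u \<Longrightarrow> gen_tree d v \<Longrightarrow> gen_tree d w \<Longrightarrow> Node u (Node v w) \<approx> Node v (Node u w)"
  unfolding tcong_def fbasis_Node by (intro bicomm_ideal.id2 fbasis_in_FA)

text \<open>Both sides are reached from (ab)(ce) by swapping b and e, once through the left and once
  through the right commutativity.\<close>
lemma tcong_comm_nodes:
  assumes "is_node p" "is_node q" "gen_tree d p" "gen_tree d q"
  shows "Node p q \<approx> Node q p"
proof -
  obtain a e c b where pq: "p = Node a e" "q = Node c b" and gen: "gen_tree d a" "gen_tree d b" "gen_tree d c" "gen_tree d e"
    using assms by (auto simp: is_node_def)
  have "Node (Node a b) (Node c e) \<approx> Node c (Node (Node a b) e)"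
    using gen by (intro tcong_left_comm) auto
  also have "\<dots> \<approx> Node c (Node (Node a e) b)"
    using gen by (intro tcong_Node_right tcong_right_comm) auto
  also have "\<dots> \<approx> Node (Node a e) (Node c b)"
    using gen by (intro tcong_left_comm) auto
  finally have p_q: "Node (Node a b) (Node c e) \<approx> Node p q" unfolding pq .
  have "Node (Node a b) (Node c e) \<approx> Node (Node a (Node c e)) b"
    using gen by (intro tcong_right_comm) auto
  also have "\<dots> \<approx> Node (Node c (Node a e)) b"
    using gen by (intro tcong_Node_left tcong_left_comm) auto
  also have "\<dots> \<approx> Node (Node c b) (Node a e)"
    using gen by (intro tcong_right_comm) auto
  finally have q_p: "Node (Node a b) (Node c e) \<approx> Node q p" unfolding pq .
  show ?thesis using tcong_trans[OF tcong_sym[OF p_q] q_p] .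
qed

lemma tcong_assoc:
  assumes "is_node u" "gen_tree d x" "gen_tree d u" "gen_tree d y"
  shows "Node (Node x u) y \<approx> Node x (Node u y)"
proof -
  have "Node (Node x u) y \<approx> Node (Node x y) u"
    using assms by (intro tcong_right_comm)
  also have "\<dots> \<approx> Node u (Node x y)"
    using assms by (intro tcong_comm_nodes) auto
  also have "\<dots> \<approx> Node x (Node u y)"
    using assms by (intro tcong_left_comm)
  finally show ?thesis .
qed

subsection \<open>Moving variables to the ends\<close>

definition left_pullable :: "nat \<Rightarrow> btree \<Rightarrow> bool" where
  "left_pullable i t \<longleftrightarrow> (\<exists>t'. gen_tree d t' \<and> is_node t' \<and> t \<approx> Node (Leaf i) t')"

lemma left_pullable_Leaf_Node: "is_node b \<Longrightarrow> gen_tree d b \<Longrightarrow> left_pullable i (Node (Leaf i) b)"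
  unfolding left_pullable_def using tcong_refl by blast

lemma left_pullable_tcong: "t \<approx> s \<Longrightarrow> left_pullable i s \<Longrightarrow> left_pullable i t"
  unfolding left_pullable_def using tcong_trans by blast

lemma left_pullable_Node_left:
  assumes "left_pullable i u" "i < d" "gen_tree d y"
  shows "left_pullable i (Node u y)"
proof -
  obtain c where c: "gen_tree d c" "is_node c" "u \<approx> Node (Leaf i) c"
    using assms(1) unfolding left_pullable_def by blast
  have "Node u y \<approx> Node (Node (Leaf i) c) y"
    using c assms by (intro tcong_Node_left)
  also have "\<dots> \<approx> Node (Leaf i) (Node c y)"
    using c assms by (intro tcong_assoc) auto
  finally show ?thesis
    using c assms(3) unfolding left_pullable_def by (intro exI[of _ "Node c y"]) auto
qed

lemma left_pullable_Node_right:
  assumes "left_pullable i u" "i < d" "gen_tree d x"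
  shows "left_pullable i (Node x u)"
proof -
  obtain c where c: "gen_tree d c" "is_node c" "u \<approx> Node (Leaf i) c"
    using assms(1) unfolding left_pullable_def by blast
  have "Node x u \<approx> Node x (Node (Leaf i) c)"
    using c assms by (intro tcong_Node_right)
  also have "\<dots> \<approx> Node (Leaf i) (Node x c)"
    using c assms by (intro tcong_left_comm) auto
  finally show ?thesis
    using c assms(3) unfolding left_pullable_def by (intro exI[of _ "Node x c"]) auto
qed

lemma left_pullable:
  assumes "is_node t" "gen_tree d t" "Poly_Mapping.lookup (yz_mon True t) (Inl i) > 0"
    "ydeg (yz_mon True t) \<ge> 2"
  shows "left_pullable i t"
  using assms
proof (induction "size t" arbitrary: t rule: less_induct)
  case less
  obtain a b where t: "t = Node a b" using \<open>is_node t\<close> by (auto simp: is_node_def)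
  have gen: "gen_tree d a" "gen_tree d b" "i < d"
    using less.prems(2,3) t yz_mon_var_bound(1) by auto
  have deg: "ydeg (yz_mon True a) + ydeg (yz_mon False b) \<ge> 2"
    using less.prems(4) t by simp
  have node_if_left_deg_1: "is_node x" if "ydeg (yz_mon True y) = 1" "ydeg (yz_mon True y) + ydeg (yz_mon False x) \<ge> 2" for x y
    using that ydeg_yz_mon_False_eq_0[of x] by auto
  consider (leaf) "a = Leaf i" | (left) "is_node a" "Poly_Mapping.lookup (yz_mon True a) (Inl i) > 0"
    | (right) "is_node b" "Poly_Mapping.lookup (yz_mon True b) (Inl i) > 0"
    using less.prems(3) t by (cases a; cases b) (auto split: if_splits)
  then show ?case
  proof cases
    case leaf
    then have "is_node b" using deg node_if_left_deg_1[of "Leaf i" b] by simp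
    then show ?thesis unfolding t leaf using gen(2) by (rule left_pullable_Leaf_Node)
  next
    case left
    show ?thesis
    proof (cases "ydeg (yz_mon True a) \<ge> 2")
      case True
      then have "left_pullable i a" using less t gen left by (intro less.hyps) auto
      then show ?thesis unfolding t using gen(3,2) by (rule left_pullable_Node_left)
    next
      case False
      then have a_deg: "ydeg (yz_mon True a) = 1" using ydeg_yz_mon_True[of a] by simp
      obtain a1 j where a: "a = Node a1 (Leaf j)" using left(1) a_deg by (rule right_factor_Leaf)
      have "is_node b" using a_deg deg by (rule node_if_left_deg_1)
      then have "left_pullable i (Node a1 b)"
        using less t a gen left ydeg_yz_mon_True[of a1] ydeg_yz_mon_False_eq_0[of b]
        by (intro less.hyps) auto
      then have "left_pullable i (Node (Node a1 b) (Leaf j))"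
        using gen(3) by (rule left_pullable_Node_left) (use gen a in simp)
      moreover have "t \<approx> Node (Node a1 b) (Leaf j)"
        using gen unfolding t a by (intro tcong_right_comm) auto
      ultimately show ?thesis by (rule left_pullable_tcong[rotated])
    qed
  next
    case right
    show ?thesis
    proof (cases "ydeg (yz_mon True b) \<ge> 2")
      case True
      then have "left_pullable i b" using less t gen right by (intro less.hyps) auto
      then show ?thesis unfolding t using gen(3,1) by (rule left_pullable_Node_right)
    next
      case False
      then have b_deg: "ydeg (yz_mon True b) = 1" using ydeg_yz_mon_True[of b] by simp
      obtain b1 j where b: "b = Node b1 (Leaf j)" using right(1) b_deg by (rule right_factor_Leaf)
      show ?thesis
      proof (cases "is_node b1")
        case True
        then have "left_pullable i (Node a b1)"
          using less t b gen right ydeg_yz_mon_True[of a] ydeg_yz_mon_False_eq_0[of b1]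
          by (intro less.hyps) (auto simp: yz_mon_node)
        then have "left_pullable i (Node (Node a b1) (Leaf j))"
          using gen(3) by (rule left_pullable_Node_left) (use gen b in simp)
        moreover have "t \<approx> Node (Node a b1) (Leaf j)"
          using gen True unfolding t b by (intro tcong_sym[OF tcong_assoc]) auto
        ultimately show ?thesis by (rule left_pullable_tcong[rotated])
      next
        case False
        then have "b1 = Leaf i" using right b by (cases b1) (auto split: if_splits)
        then have "t \<approx> Node (Leaf i) (Node a (Leaf j))"
          using gen unfolding t b by (simp add: tcong_left_comm)
        moreover have "left_pullable i (Node (Leaf i) (Node a (Leaf j)))"
          using gen b by (intro left_pullable_Leaf_Node) auto
        ultimately show ?thesis by (rule left_pullable_tcong)
      qed
    qed
  qed
qed

lemma right_pullable:
  assumes "is_node t" "gen_tree d t" "ydeg (yz_mon True t) = 1"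
    "Poly_Mapping.lookup (yz_mon True t) (Inr j) > 0" "zdeg (yz_mon True t) \<ge> 2"
  shows "\<exists>t'. gen_tree d t' \<and> is_node t' \<and> t \<approx> Node t' (Leaf j)"
  using assms
proof (induction t)
  case (Node a b)
  obtain k where b: "b = Leaf k" using Node.prems(1,3) right_factor_Leaf by blast
  have gen: "gen_tree d a" "k < d" "j < d"
    using Node.prems(2) b yz_mon_var_bound(2)[OF Node.prems(2,4)] by auto
  have a_deg: "ydeg (yz_mon True a) = 1" "zdeg (yz_mon True a) \<ge> 1"
    using Node.prems(3,5) b by auto
  then have a_node: "is_node a" using zdeg_yz_mon_True_eq_0[of a] by auto
  show ?case
  proof (cases "k = j")
    case True
    then show ?thesis using gen a_node b tcong_refl by blast
  next
    case False
    then have a_j: "Poly_Mapping.lookup (yz_mon True a) (Inr j) > 0"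
      using Node.prems(4) b by simp
    obtain a1 j' where a: "a = Node a1 (Leaf j')" using a_node a_deg(1) by (rule right_factor_Leaf)
    have "\<exists>a'. gen_tree d a' \<and> a \<approx> Node a' (Leaf j)"
    proof (cases "j' = j")
      case True
      then show ?thesis using gen a tcong_refl by auto
    next
      case False
      then have "Poly_Mapping.lookup (yz_mon True a1) (Inr j) > 0" using a_j a by simp
      then have "zdeg (yz_mon True a) \<ge> 2"
        using a zdeg_eq_0_iff[of "yz_mon True a1"] by (auto simp: Suc_le_eq)
      then show ?thesis using Node.IH(1) a_node gen a_deg a_j by blast
    qed
    then obtain a' where a': "gen_tree d a'" "a \<approx> Node a' (Leaf j)" by blast
    have "Node a b \<approx> Node (Node a' (Leaf j)) (Leaf k)"
      using a' gen b by (simp add: tcong_Node_left)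
    also have "\<dots> \<approx> Node (Node a' (Leaf k)) (Leaf j)"
      using a' gen by (intro tcong_right_comm) auto
    finally show ?thesis using a' gen by (intro exI[of _ "Node a' (Leaf k)"]) auto
  qed
qed simp

lemma tcong_if_yz_mon_eq:
  assumes "is_node s" "is_node t" "gen_tree d s" "gen_tree d t" "yz_mon True s = yz_mon True t"
  shows "s \<approx> t"
  using assms
proof (induction "size s" arbitrary: s t rule: less_induct)
  case less
  have "ydeg (yz_mon True s) \<ge> 1" "zdeg (yz_mon True s) \<ge> 1"
    using ydeg_yz_mon_True zdeg_yz_mon_True_eq_0[of s] less.prems(1) by auto
  then consider (y) "ydeg (yz_mon True s) \<ge> 2" | (z) "ydeg (yz_mon True s) = 1" "zdeg (yz_mon True s) \<ge> 2"
    | (yz) "ydeg (yz_mon True s) = 1" "zdeg (yz_mon True s) = 1"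
    by linarith
  then show ?case
  proof cases
    case y
    then obtain i where i: "Poly_Mapping.lookup (yz_mon True s) (Inl i) > 0"
      using ex_Inl_if_ydeg_pos by fastforce
    obtain s' t' where s': "gen_tree d s'" "is_node s'" "s \<approx> Node (Leaf i) s'"
      and t': "gen_tree d t'" "is_node t'" "t \<approx> Node (Leaf i) t'"
      using left_pullable[of s i] left_pullable[of t i] less.prems y i
      unfolding left_pullable_def by metis
    have "yz_mon True s' = yz_mon True t'"
      using tcong_yz_mon[OF s'(3), of True] tcong_yz_mon[OF t'(3), of True] less.prems(5)
      by (simp add: yz_mon_node s'(2) t'(2))
    moreover have "size s' < size s" using tcong_size[OF s'(3)] by simp
    ultimately have "s' \<approx> t'" using s' t' by (intro less.hyps) auto
    then have "Node (Leaf i) s' \<approx> Node (Leaf i) t'"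
      using yz_mon_var_bound(1)[OF less.prems(3) i] by (simp add: tcong_Node_right)
    then show ?thesis using s'(3) t'(3) tcong_trans tcong_sym by metis
  next
    case z
    then obtain j where j: "Poly_Mapping.lookup (yz_mon True s) (Inr j) > 0"
      using ex_Inr_if_zdeg_pos by fastforce
    obtain s' t' where s': "gen_tree d s'" "is_node s'" "s \<approx> Node s' (Leaf j)"
      and t': "gen_tree d t'" "is_node t'" "t \<approx> Node t' (Leaf j)"
      using right_pullable[of s j] right_pullable[of t j] less.prems z j by metis
    have "yz_mon True s' = yz_mon True t'"
      using tcong_yz_mon[OF s'(3), of True] tcong_yz_mon[OF t'(3), of True] less.prems(5)
      by simp
    moreover have "size s' < size s" using tcong_size[OF s'(3)] by simp
    ultimately have "s' \<approx> t'" using s' t' by (intro less.hyps) auto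
    then have "Node s' (Leaf j) \<approx> Node t' (Leaf j)"
      using yz_mon_var_bound(2)[OF less.prems(3) j] by (simp add: tcong_Node_left)
    then show ?thesis using s'(3) t'(3) tcong_trans tcong_sym by metis
  next
    case yz
    obtain i j where "s = Node (Leaf i) (Leaf j)" using less.prems(1) yz by (rule product_of_leaves)
    moreover obtain i' j' where "t = Node (Leaf i') (Leaf j')"
      using less.prems(2) yz less.prems(5) by (metis product_of_leaves)
    ultimately show ?thesis using less.prems(5) tcong_refl
      by (auto simp: poly_mapping_eq_iff fun_eq_iff split: if_splits)
  qed
qed

end

subsection \<open>Trees representing monomials\<close>

lemma ydeg_1_zdeg_1:
  assumes "ydeg m = 1" "zdeg m = 1"
  obtains i j where "m = Poly_Mapping.single (Inl i) 1 + Poly_Mapping.single (Inr j) 1"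
proof -
  obtain i where "Poly_Mapping.lookup m (Inl i) > 0" using assms(1) ex_Inl_if_ydeg_pos by fastforce
  then have m: "m = Poly_Mapping.single (Inl i) 1 + (m - Poly_Mapping.single (Inl i) 1)" (is "_ = _ + ?m1")
    by (rule split_off_var)
  have "ydeg ?m1 = 0" "zdeg ?m1 = 1" using assms arg_cong[OF m, of ydeg] arg_cong[OF m, of zdeg] by simp_all
  then obtain j where "Poly_Mapping.lookup ?m1 (Inr j) > 0" using ex_Inr_if_zdeg_pos by fastforce
  then have m1: "?m1 = Poly_Mapping.single (Inr j) 1 + (?m1 - Poly_Mapping.single (Inr j) 1)" (is "_ = _ + ?m2")
    by (rule split_off_var)
  have "ydeg ?m2 + zdeg ?m2 = 0"
    using \<open>ydeg ?m1 = 0\<close> \<open>zdeg ?m1 = 1\<close> arg_cong[OF m1, of ydeg] arg_cong[OF m1, of zdeg] by simp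
  then have "?m2 = 0" by (rule ydeg_zdeg_eq_0)
  then show ?thesis using m m1 that by simp
qed

lemma exists_tree_yz_mon:
  assumes "mono_vars_ok d m" "ydeg m \<ge> 1" "zdeg m \<ge> 1"
  shows "\<exists>t. is_node t \<and> gen_tree d t \<and> yz_mon True t = m"
  using assms
proof (induction "ydeg m + zdeg m" arbitrary: m rule: less_induct)
  case less
  consider (y) "ydeg m \<ge> 2" | (z) "ydeg m = 1" "zdeg m \<ge> 2" | (yz) "ydeg m = 1" "zdeg m = 1"
    using less.prems(2,3) by linarith
  then show ?case
  proof cases
    case y
    then obtain i where i: "Poly_Mapping.lookup m (Inl i) > 0" using ex_Inl_if_ydeg_pos by fastforce
    then have m: "m = Poly_Mapping.single (Inl i) 1 + (m - Poly_Mapping.single (Inl i) 1)" (is "_ = _ + ?m'")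
      by (rule split_off_var)
    have "ydeg m = ydeg ?m' + 1" "zdeg m = zdeg ?m'" using arg_cong[OF m, of ydeg] arg_cong[OF m, of zdeg] by simp_all
    then obtain t' where t': "is_node t'" "gen_tree d t'" "yz_mon True t' = ?m'"
      using y less.prems(3) less.hyps[of ?m'] mono_vars_ok_diff[OF less.prems(1)] by auto
    show ?thesis
      using t' m mono_vars_ok_lookup(1)[OF less.prems(1) i]
      by (intro exI[of _ "Node (Leaf i) t'"]) (auto simp: yz_mon_node)
  next
    case z
    then obtain j where j: "Poly_Mapping.lookup m (Inr j) > 0" using ex_Inr_if_zdeg_pos by fastforce
    then have m: "m = Poly_Mapping.single (Inr j) 1 + (m - Poly_Mapping.single (Inr j) 1)" (is "_ = _ + ?m'")
      by (rule split_off_var)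
    have "ydeg m = ydeg ?m'" "zdeg m = zdeg ?m' + 1" using arg_cong[OF m, of ydeg] arg_cong[OF m, of zdeg] by simp_all
    then obtain t' where t': "is_node t'" "gen_tree d t'" "yz_mon True t' = ?m'"
      using z less.hyps[of ?m'] mono_vars_ok_diff[OF less.prems(1)] by auto
    show ?thesis
      using t' m mono_vars_ok_lookup(2)[OF less.prems(1) j]
      by (intro exI[of _ "Node t' (Leaf j)"]) (auto simp: add.commute)
  next
    case yz
    then obtain i j where m: "m = Poly_Mapping.single (Inl i) 1 + Poly_Mapping.single (Inr j) 1"
      by (rule ydeg_1_zdeg_1)
    then have "i < d" "j < d" using mono_vars_ok_lookup[OF less.prems(1)] by auto
    then show ?thesis using m by (intro exI[of _ "Node (Leaf i) (Leaf j)"]) simp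
  qed
qed

definition tree_rep :: "nat \<Rightarrow> monomial \<Rightarrow> btree" where
  "tree_rep d m = (SOME t. is_node t \<and> gen_tree d t \<and> yz_mon True t = m)"

lemma tree_rep:
  assumes "mono_vars_ok d m" "ydeg m \<ge> 1" "zdeg m \<ge> 1"
  shows "is_node (tree_rep d m)" "gen_tree d (tree_rep d m)" "yz_mon True (tree_rep d m) = m"
  using someI_ex[OF exists_tree_yz_mon[OF assms]] unfolding tree_rep_def by blast+

lemma tree_rep_yz_mon:
  assumes "is_node t" "gen_tree d t"
  shows "is_node (tree_rep d (yz_mon True t))" "gen_tree d (tree_rep d (yz_mon True t))"
    "yz_mon True (tree_rep d (yz_mon True t)) = yz_mon True t"
  using tree_rep[of d "yz_mon True t"] assms mono_vars_ok_yz_mon ydeg_yz_mon_True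
    zdeg_yz_mon_True_eq_0[of t] by auto

text \<open>A linear section of yz_map on omega_tensor.\<close>
definition lift :: "nat \<Rightarrow> 'k pol \<Rightarrow> btree \<Rightarrow> 'k::field" where
  "lift d p = fsum (Poly_Mapping.keys p) (\<lambda>m. fsmul (Poly_Mapping.lookup p m) (fbasis (tree_rep d m)))"

lemma poly_mapping_sum_single: "(\<Sum>m\<in>Poly_Mapping.keys p. Poly_Mapping.single m (Poly_Mapping.lookup p m)) = p"
  by (rule poly_mapping_eqI) (simp add: lookup_sum sum.delta' in_keys_iff)

lemma lift_in_FA_sq: "p \<in> omega_tensor d \<Longrightarrow> lift d p \<in> FA_sq d"
  unfolding lift_def omega_tensor_def
  by (auto intro!: fsum_in_FA_sq FA_sq.smul fbasis_in_FA_sq simp: tree_rep)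

lemma yz_map_lift: "p \<in> omega_tensor d \<Longrightarrow> yz_map True (lift d p) = p"
  unfolding lift_def omega_tensor_def
  by (simp add: yz_map_fsum finite_supp_fsmul yz_map_fsmul tree_rep psmul_eq_mult mult_single
      poly_mapping_sum_single cong: sum.cong)

lemma sum_keys_yz_map:
  fixes H :: "monomial \<Rightarrow> 'k::field \<Rightarrow> 'a::comm_monoid_add"
  assumes fin: "finite (supp f)" and H: "\<And>m. H m 0 = 0" "\<And>m a b. H m (a + b) = H m a + H m b"
  shows "(\<Sum>m\<in>Poly_Mapping.keys (yz_map s f). H m (Poly_Mapping.lookup (yz_map s f) m))
       = (\<Sum>t\<in>supp f. H (yz_mon s t) (f t))"
proof -
  let ?M = "yz_mon s ` supp f"
  have "(\<Sum>m\<in>Poly_Mapping.keys (yz_map s f). H m (Poly_Mapping.lookup (yz_map s f) m))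
      = (\<Sum>m\<in>?M. H m (Poly_Mapping.lookup (yz_map s f) m))"
    by (rule sum.mono_neutral_left) (use fin keys_yz_map H(1) in \<open>auto simp: in_keys_iff\<close>)
  also have "\<dots> = (\<Sum>m\<in>?M. \<Sum>t\<in>{t\<in>supp f. yz_mon s t = m}. H m (f t))"
  proof (rule sum.cong[OF refl])
    fix m
    have "Poly_Mapping.lookup (yz_map s f) m = (\<Sum>t\<in>{t\<in>supp f. yz_mon s t = m}. f t)"
      using fin by (simp add: lookup_yz_map sum.inter_filter)
    then show "H m (Poly_Mapping.lookup (yz_map s f) m) = (\<Sum>t\<in>{t\<in>supp f. yz_mon s t = m}. H m (f t))"
      using sum_comp_morphism[of "H m", OF H, symmetric] by (simp add: comp_def)
  qed
  also have "\<dots> = (\<Sum>m\<in>?M. \<Sum>t\<in>{t\<in>supp f. yz_mon s t = m}. H (yz_mon s t) (f t))"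
    by (intro sum.cong) auto
  also have "\<dots> = (\<Sum>t\<in>supp f. H (yz_mon s t) (f t))"
    by (rule sum.image_gen[OF fin, symmetric])
  finally show ?thesis .
qed

lemma lift_yz_map:
  assumes "finite (supp f)"
  shows "lift d (yz_map True f) = fsum (supp f) (\<lambda>t. fsmul (f t) (fbasis (tree_rep d (yz_mon True t))))"
proof
  fix r
  show "lift d (yz_map True f) r = fsum (supp f) (\<lambda>t. fsmul (f t) (fbasis (tree_rep d (yz_mon True t)))) r"
    unfolding lift_def fsum_def fsmul_def
    by (rule sum_keys_yz_map[OF assms, where H = "\<lambda>m c. c * fbasis (tree_rep d m) r"])
      (simp_all add: distrib_right)
qed

lemma FA_sq_minus_lift_in_ideal:
  fixes f :: "btree \<Rightarrow> 'k::field"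
  assumes f: "f \<in> FA_sq d"
  shows "fminus f (lift d (yz_map True f)) \<in> bicomm_ideal d"
proof -
  have fin: "finite (supp f)" and nodes: "\<And>t. t \<in> supp f \<Longrightarrow> is_node t \<and> gen_tree d t"
    using FA_sqD[OF f] by auto
  have "fminus f (lift d (yz_map True f))
      = fsum (supp f) (\<lambda>t. fsmul (f t) (fminus (fbasis t) (fbasis (tree_rep d (yz_mon True t)))))"
  proof
    fix r
    have "(\<Sum>t\<in>supp f. f t * fbasis t r) = (\<Sum>t\<in>supp f. if t = r then f t else 0)"
      by (intro sum.cong) (auto simp: fbasis_def)
    also have "\<dots> = f r"
      using fin by (simp add: sum.delta) (simp add: supp_def)
    finally have "f r = (\<Sum>t\<in>supp f. f t * fbasis t r)" ..
    then show "fminus f (lift d (yz_map True f)) r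
        = fsum (supp f) (\<lambda>t. fsmul (f t) (fminus (fbasis t) (fbasis (tree_rep d (yz_mon True t))))) r"
      by (simp add: lift_yz_map[OF fin] fminus_def fsum_def fsmul_def right_diff_distrib sum_subtractf)
  qed
  also have "\<dots> \<in> bicomm_ideal d"
  proof (rule fsum_in_bicomm_ideal[OF fin])
    fix t assume "t \<in> supp f"
    then have "tcong TYPE('k) d t (tree_rep d (yz_mon True t))"
      using nodes tree_rep_yz_mon by (intro tcong_if_yz_mon_eq) auto
    then show "fsmul (f t) (fminus (fbasis t) (fbasis (tree_rep d (yz_mon True t)))) \<in> bicomm_ideal d"
      unfolding tcong_def by (rule bicomm_ideal.smul)
  qed
  finally show ?thesis .
qed

lemma bicomm_ideal_if_yz_map_eq_0:
  fixes f :: "btree \<Rightarrow> 'k::field"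
  assumes "f \<in> FA_sq d" "yz_map True f = 0"
  shows "f \<in> bicomm_ideal d"
proof -
  have "lift d (0 :: 'k pol) = fzero" by (simp add: lift_def fsum_empty)
  moreover have "fminus f fzero = f" by (simp add: fminus_def fzero_def)
  ultimately show ?thesis using FA_sq_minus_lift_in_ideal[OF assms(1)] assms(2) by simp
qed

lemma yz_map_in_omega_tensor:
  assumes "f \<in> FA_sq d"
  shows "yz_map True f \<in> omega_tensor d"
  unfolding omega_tensor_def
proof (rule CollectI, rule ballI)
  fix m assume "m \<in> Poly_Mapping.keys (yz_map True f)"
  then obtain t where t: "t \<in> supp f" "m = yz_mon True t" using keys_yz_map by blast
  then have "is_node t" "gen_tree d t" using FA_sqD[OF assms] by auto
  then show "mono_vars_ok d m \<and> ydeg m \<ge> 1 \<and> zdeg m \<ge> 1"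
    using t mono_vars_ok_yz_mon ydeg_yz_mon_True zdeg_yz_mon_True_eq_0[of t] by auto
qed

lemma induces_iso_yz_map: "induces_iso d (yz_map True :: (btree \<Rightarrow> 'k::field) \<Rightarrow> 'k pol) (omega_tensor d)"
  unfolding induces_iso_def
proof (intro conjI ballI allI)
  show "yz_map True ` FA_sq d = (omega_tensor d :: 'k pol set)"
  proof
    show "yz_map True ` FA_sq d \<subseteq> (omega_tensor d :: 'k pol set)"
      using yz_map_in_omega_tensor by blast
    show "(omega_tensor d :: 'k pol set) \<subseteq> yz_map True ` FA_sq d"
    proof
      fix p :: "'k pol" assume p: "p \<in> omega_tensor d"
      show "p \<in> yz_map True ` FA_sq d"
        using yz_map_lift[OF p, symmetric] lift_in_FA_sq[OF p] by (rule image_eqI)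
    qed
  qed
next
  fix f :: "btree \<Rightarrow> 'k" assume f: "f \<in> FA_sq d"
  then show "yz_map True f = 0 \<longleftrightarrow> f \<in> bicomm_ideal d"
    using bicomm_ideal_if_yz_map_eq_0 yz_map_bicomm_ideal by blast
  fix g :: "btree \<Rightarrow> 'k" and c assume "g \<in> FA_sq d"
  then show "yz_map True (fadd f g) = yz_map True f + yz_map True g"
    using FA_sqD[OF f] FA_sqD[of g] by (simp add: yz_map_fadd)
  show "yz_map True (fsmul c f) = psmul c (yz_map True f)"
    using FA_sqD[OF f] by (simp add: yz_map_fsmul)
qed

lemma pol_homog_yz_map: "FA_homog \<alpha> f \<Longrightarrow> pol_homog \<alpha> (yz_map s f)"
  unfolding FA_homog_def pol_homog_def using keys_yz_map mdeg_yz_mon by (fastforce simp: supp_def)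

lemma Wsum_eq_omega_tensor: "Wsum d = (omega_tensor d :: 'k::field pol set)"
proof
  show "Wsum d \<subseteq> (omega_tensor d :: 'k pol set)"
  proof
    fix P :: "'k pol" assume "P \<in> Wsum d"
    then obtain S F where S: "S \<subseteq> {(p, q). p \<ge> 1 \<and> q \<ge> 1}"
      and F: "\<forall>pq\<in>S. F pq \<in> Wtensor d (fst pq) (snd pq)" and P: "P = (\<Sum>pq\<in>S. F pq)"
      unfolding Wsum_def by blast
    have "Poly_Mapping.keys P \<subseteq> (\<Union>pq\<in>S. Poly_Mapping.keys (F pq))"
      unfolding P by (rule keys_sum)
    then show "P \<in> omega_tensor d"
      using S F unfolding omega_tensor_def Wtensor_def by (fastforce dest!: subsetD)
  qed
next
  show "omega_tensor d \<subseteq> (Wsum d :: 'k pol set)"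
  proof
    fix P :: "'k pol" assume P: "P \<in> omega_tensor d"
    define bideg where "bideg m = (ydeg m, zdeg m)" for m :: monomial
    define F where "F pq = (\<Sum>m\<in>{m\<in>Poly_Mapping.keys P. bideg m = pq}. Poly_Mapping.single m (Poly_Mapping.lookup P m))" for pq
    have "bideg ` Poly_Mapping.keys P \<subseteq> {(p, q). p \<ge> 1 \<and> q \<ge> 1}"
      using P by (auto simp: omega_tensor_def bideg_def)
    moreover have "F pq \<in> Wtensor d (fst pq) (snd pq)" if "pq \<in> bideg ` Poly_Mapping.keys P" for pq
    proof -
      have "Poly_Mapping.keys (F pq) \<subseteq> (\<Union>m\<in>{m\<in>Poly_Mapping.keys P. bideg m = pq}.
          Poly_Mapping.keys (Poly_Mapping.single m (Poly_Mapping.lookup P m)))"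
        unfolding F_def by (rule keys_sum)
      then have "Poly_Mapping.keys (F pq) \<subseteq> {m\<in>Poly_Mapping.keys P. bideg m = pq}"
        by auto
      then show ?thesis using P by (auto simp: Wtensor_def omega_tensor_def bideg_def)
    qed
    moreover have "P = (\<Sum>m\<in>Poly_Mapping.keys P. Poly_Mapping.single m (Poly_Mapping.lookup P m))"
      by (rule poly_mapping_sum_single[symmetric])
    then have "P = (\<Sum>pq\<in>bideg ` Poly_Mapping.keys P. F pq)"
      unfolding F_def by (simp only: sum.image_gen[OF finite_keys, of _ P bideg])
    ultimately show "P \<in> Wsum d"
      unfolding Wsum_def by (intro CollectI exI[of _ "bideg ` Poly_Mapping.keys P"] exI[of _ F]) auto
  qed
qed

definition subst_mon :: "nat \<Rightarrow> (nat \<Rightarrow> nat \<Rightarrow> 'k::field) \<Rightarrow> monomial \<Rightarrow> 'k pol" where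
  "subst_mon d g m = (\<Prod>v\<in>Poly_Mapping.keys m. lin_var d g v ^ Poly_Mapping.lookup m v)"

lemma subst_mon_add: "subst_mon d g (m + n) = subst_mon d g m * subst_mon d g n"
  unfolding subst_mon_def by (rule prod_keys_add) (simp_all add: power_add)

lemma subst_mon_single: "subst_mon d g (Poly_Mapping.single v (Suc 0)) = lin_var d g v"
  by (simp add: subst_mon_def)

lemma finite_supp_act_tree: "finite (supp (act_tree d g t))"
  by (induction t) (simp_all add: finite_supp_fsum finite_supp_fsmul finite_supp_fmult)

lemma yz_map_act_tree: "yz_map s (act_tree d g t) = subst_mon d g (yz_mon s t)"
proof (induction t arbitrary: s)
  case (Leaf i)
  have "yz_map s (act_tree d g (Leaf i)) = (\<Sum>j<d. psmul (g j i) (Poly_Mapping.single (yz_mon s (Leaf j)) 1))"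
    by (simp add: yz_map_fsum yz_map_fsmul finite_supp_fsmul)
  also have "\<dots> = subst_mon d g (yz_mon s (Leaf i))"
    by (cases s) (simp_all add: subst_mon_single lin_var_def Yv_def Zv_def)
  finally show ?case .
next
  case (Node a b)
  then show ?case by (simp add: finite_supp_act_tree yz_map_fmult subst_mon_add)
qed

lemma yz_map_act_FA:
  assumes "finite (supp f)"
  shows "yz_map True (act_FA d g f) = act_pol d g (yz_map True f)"
proof -
  have fin: "finite (supp (fsmul (f t) (act_tree d g t)))" for t
    by (rule finite_supp_fsmul[OF finite_supp_act_tree])
  have "yz_map True (act_FA d g f) = (\<Sum>t\<in>supp f. yz_map True (fsmul (f t) (act_tree d g t)))"
    unfolding act_FA_def supp_def[symmetric] using assms fin by (rule yz_map_fsum)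
  also have "\<dots> = (\<Sum>t\<in>supp f. psmul (f t) (subst_mon d g (yz_mon True t)))"
    by (simp add: yz_map_fsmul finite_supp_act_tree yz_map_act_tree)
  also have "\<dots> = act_pol d g (yz_map True f)"
    unfolding act_pol_def subst_mon_def[symmetric]
    by (rule sum_keys_yz_map[OF assms, symmetric]) (simp_all add: psmul_eq_mult single_add distrib_right)
  finally show ?thesis .
qed

theorem lemma3p1:
  fixes d :: nat
  assumes "d \<ge> 1"
  shows "(\<exists>\<phi> :: (btree \<Rightarrow> 'k::field_char_0) \<Rightarrow> 'k pol.
            induces_iso d \<phi> (omega_tensor d) \<and>
            (\<forall>\<alpha> f. f \<in> FA_sq d \<and> FA_homog \<alpha> f \<longrightarrow> pol_homog \<alpha> (\<phi> f)))
       \<and> (\<exists>\<psi> :: (btree \<Rightarrow> 'k) \<Rightarrow> 'k pol.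
            induces_iso d \<psi> (Wsum d) \<and>
            (\<forall>g\<in>GL d. \<forall>f\<in>FA_sq d. \<psi> (act_FA d g f) = act_pol d g (\<psi> f)))"
proof (intro conjI exI)
  show "induces_iso d (yz_map True) (omega_tensor d :: 'k pol set)"
    by (rule induces_iso_yz_map)
  then show "induces_iso d (yz_map True) (Wsum d :: 'k pol set)"
    by (simp only: Wsum_eq_omega_tensor)
  show "\<forall>\<alpha> f. f \<in> FA_sq d \<and> FA_homog \<alpha> f \<longrightarrow> pol_homog \<alpha> (yz_map True f :: 'k pol)"
    by (blast intro: pol_homog_yz_map)
  show "\<forall>g\<in>GL d. \<forall>f\<in>FA_sq d. yz_map True (act_FA d g f) = act_pol d g (yz_map True f :: 'k pol)"
    using FA_sqD yz_map_act_FA by blast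
qed

end
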